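(* Let $R$ be a $*$-regular ring. Then $R$ is strongly $J$-$*$-clean if and only if $R$ is Boolean.
   Context: All rings are associative with identity. A $*$-ring is a ring $R$ with an involution $*$, i.e. a map $a\mapsto a^*$ with $(a+b)^*=a^*+b^*$, $(ab)^*=b^*a^*$, $(a^* )^*=a$. A projection is an element $e$ with $e^2=e=e^*$. A $*$-ring $R$ is $*$-regular if it is von Neumann regular and the involution is proper; equivalently, for every $x\in R$ there exists a projection $p$ with $xR=pR$. $J(R)$ denotes the Jacobson radical. $R$ is strongly $J$-$*$-clean if every $a\in R$ can be written $a=e+u$ with $e$ a projection, $u\in J(R)$ and $ae=ea$. A ring is Boolean if every element is idempotent. *)

theory Defs
  imports Main
begin

definition is_involution :: "('a::ring_1 \<Rightarrow> 'a) \<Rightarrow> bool" where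
  "is_involution star \<longleftrightarrow>
     (\<forall>a b. star (a + b) = star a + star b) \<and>
     (\<forall>a b. star (a * b) = star b * star a) \<and>
     (\<forall>a. star (star a) = a)"

definition is_projection :: "('a::ring_1 \<Rightarrow> 'a) \<Rightarrow> 'a \<Rightarrow> bool" where
  "is_projection star e \<longleftrightarrow> e * e = e \<and> star e = e"

definition von_neumann_regular :: "'a::ring_1 itself \<Rightarrow> bool" where
  "von_neumann_regular _ \<longleftrightarrow> (\<forall>x::'a. \<exists>y. x * y * x = x)"

definition proper_involution :: "('a::ring_1 \<Rightarrow> 'a) \<Rightarrow> bool" where
  "proper_involution star \<longleftrightarrow> (\<forall>x. star x * x = 0 \<longrightarrow> x = 0)"

definition star_regular :: "('a::ring_1 \<Rightarrow> 'a) \<Rightarrow> bool" where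
  "star_regular star \<longleftrightarrow> is_involution star \<and> von_neumann_regular TYPE('a)
     \<and> proper_involution star"

definition left_ideal :: "'a::ring_1 set \<Rightarrow> bool" where
  "left_ideal I \<longleftrightarrow> 0 \<in> I \<and> (\<forall>x\<in>I. \<forall>y\<in>I. x + y \<in> I) \<and> (\<forall>x\<in>I. - x \<in> I)
     \<and> (\<forall>r. \<forall>x\<in>I. r * x \<in> I)"

definition maximal_left_ideal :: "'a::ring_1 set \<Rightarrow> bool" where
  "maximal_left_ideal I \<longleftrightarrow> left_ideal I \<and> I \<noteq> UNIV \<and>
     (\<forall>K. left_ideal K \<and> I \<subseteq> K \<and> K \<noteq> UNIV \<longrightarrow> K = I)"

definition jacobson :: "'a::ring_1 set" where
  "jacobson = \<Inter> {I. maximal_left_ideal I}"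

definition strongly_J_star_clean :: "('a::ring_1 \<Rightarrow> 'a) \<Rightarrow> bool" where
  "strongly_J_star_clean star \<longleftrightarrow>
     (\<forall>a. \<exists>e u. a = e + u \<and> is_projection star e \<and> u \<in> jacobson \<and> a * e = e * a)"

definition boolean_ring :: "'a::ring_1 itself \<Rightarrow> bool" where
  "boolean_ring _ \<longleftrightarrow> (\<forall>x::'a. x * x = x)"

end

theory Submission
  imports Defs
begin

text \<open>The Jacobson radical of a von Neumann regular ring is zero: for \<open>u \<in> J(R)\<close> with
  \<open>u y u = u\<close>, the element \<open>y u\<close> is an idempotent of \<open>J(R)\<close>, and an idempotent \<open>f \<noteq> 0\<close>
  cannot lie in \<open>J(R)\<close> because \<open>R(1 - f)\<close> is a proper left ideal that any maximal left
  ideal above it would have to share with \<open>f\<close>. So in a \<open>*\<close>-regular ring a strongly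
  \<open>J\<close>-\<open>*\<close>-clean decomposition \<open>a = e + u\<close> forces \<open>a = e\<close>, and every element is idempotent.
  Conversely, a Boolean ring is commutative, so every element is a normal idempotent, and
  in a ring with proper involution normal idempotents are projections; hence \<open>a = a + 0\<close>
  is the required decomposition.\<close>

lemma left_ideal_eq_UNIV_iff:
  assumes "left_ideal I"
  shows "I = UNIV \<longleftrightarrow> 1 \<in> I"
proof
  assume "1 \<in> I"
  then have "x * 1 \<in> I" for x using assms unfolding left_ideal_def by blast
  then show "I = UNIV" by auto
qed auto

lemma left_ideal_range_mult_right: "left_ideal (range (\<lambda>r. r * x))"
  unfolding left_ideal_def
proof (intro conjI ballI allI)
  show "0 \<in> range (\<lambda>r. r * x)" by (rule range_eqI[of _ _ 0]) simp
next
  fix y z assume "y \<in> range (\<lambda>r. r * x)" "z \<in> range (\<lambda>r. r * x)"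
  then obtain r q where "y = r * x" "z = q * x" by blast
  then show "y + z \<in> range (\<lambda>r. r * x)" by (auto intro: range_eqI[of _ _ "r + q"] simp: distrib_right)
next
  fix y assume "y \<in> range (\<lambda>r. r * x)"
  then obtain r where "y = r * x" by blast
  then show "- y \<in> range (\<lambda>r. r * x)" by (auto intro: range_eqI[of _ _ "- r"])
next
  fix t y assume "y \<in> range (\<lambda>r. r * x)"
  then obtain r where "y = r * x" by blast
  then show "t * y \<in> range (\<lambda>r. r * x)" by (auto intro: range_eqI[of _ _ "t * r"] simp: mult.assoc)
qed

lemma left_ideal_Union_chain:
  assumes "C \<noteq> {}" and "subset.chain {K. left_ideal K} C"
  shows "left_ideal (\<Union>C)"
proof -
  have ideals: "\<And>K. K \<in> C \<Longrightarrow> left_ideal K"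
    and total: "\<And>X Y. X \<in> C \<Longrightarrow> Y \<in> C \<Longrightarrow> X \<subseteq> Y \<or> Y \<subseteq> X"
    using assms(2) unfolding subset.chain_def by auto
  show ?thesis
    unfolding left_ideal_def
  proof (intro conjI ballI allI)
    show "0 \<in> \<Union>C" using assms(1) ideals unfolding left_ideal_def by blast
  next
    fix x y assume "x \<in> \<Union>C" "y \<in> \<Union>C"
    then obtain X Y where XY: "X \<in> C" "Y \<in> C" "x \<in> X" "y \<in> Y" by blast
    with total consider "X \<subseteq> Y" | "Y \<subseteq> X" by blast
    then obtain Z where Z: "Z \<in> C" "x \<in> Z" "y \<in> Z"
      by cases (use XY in blast)+
    then have "x + y \<in> Z" using ideals[of Z] unfolding left_ideal_def by blast
    then show "x + y \<in> \<Union>C" using Z(1) by blast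
  next
    fix x assume "x \<in> \<Union>C"
    then show "- x \<in> \<Union>C" using ideals unfolding left_ideal_def by blast
  next
    fix r x assume "x \<in> \<Union>C"
    then show "r * x \<in> \<Union>C" using ideals unfolding left_ideal_def by blast
  qed
qed

lemma exists_maximal_left_ideal_superset:
  fixes L :: "'a::ring_1 set"
  assumes "left_ideal L" and "1 \<notin> L"
  shows "\<exists>M. maximal_left_ideal M \<and> L \<subseteq> M"
proof -
  define A where "A = {K::'a set. left_ideal K \<and> L \<subseteq> K \<and> 1 \<notin> K}"
  have "\<exists>M\<in>A. \<forall>X\<in>A. M \<subseteq> X \<longrightarrow> X = M"
  proof (rule subset_Zorn)
    fix C assume chain: "subset.chain A C"
    show "\<exists>U\<in>A. \<forall>X\<in>C. X \<subseteq> U"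
    proof (cases "C = {}")
      case True
      then show ?thesis using assms unfolding A_def by auto
    next
      case False
      have "subset.chain {K. left_ideal K} C"
        using chain unfolding subset.chain_def A_def by auto
      then have "left_ideal (\<Union>C)" using False by (rule left_ideal_Union_chain[rotated])
      moreover have "C \<subseteq> A" using chain unfolding subset.chain_def by blast
      then have "L \<subseteq> \<Union>C" "1 \<notin> \<Union>C" using False unfolding A_def by blast+
      ultimately show ?thesis unfolding A_def by blast
    qed
  qed
  then obtain M where M: "M \<in> A" "\<And>X. X \<in> A \<Longrightarrow> M \<subseteq> X \<Longrightarrow> X = M" by blast
  have "maximal_left_ideal M"
    unfolding maximal_left_ideal_def
  proof (intro conjI allI impI)
    show "left_ideal M" "M \<noteq> UNIV" using M(1) unfolding A_def by auto
  next
    fix K assume K: "left_ideal K \<and> M \<subseteq> K \<and> K \<noteq> UNIV"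
    then have "K \<in> A" using M(1) left_ideal_eq_UNIV_iff unfolding A_def by blast
    then show "K = M" using M(2) K by blast
  qed
  then show ?thesis using M(1) unfolding A_def by auto
qed

lemma zero_in_jacobson: "0 \<in> (jacobson :: 'a::ring_1 set)"
  unfolding jacobson_def maximal_left_ideal_def left_ideal_def by blast

lemma jacobson_mult_left:
  assumes "u \<in> jacobson"
  shows "r * u \<in> (jacobson :: 'a::ring_1 set)"
  unfolding jacobson_def
proof (rule InterI)
  fix M :: "'a set" assume "M \<in> {I. maximal_left_ideal I}"
  then have "left_ideal M" "u \<in> M" using assms unfolding jacobson_def maximal_left_ideal_def by auto
  then show "r * u \<in> M" unfolding left_ideal_def by blast
qed

lemma idempotent_in_jacobson_eq_0:
  fixes f :: "'a::ring_1"
  assumes idem: "f * f = f" and "f \<in> jacobson"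
  shows "f = 0"
proof (rule ccontr)
  assume "f \<noteq> 0"
  define L where "L = range (\<lambda>r. r * (1 - f))"
  have "1 \<notin> L"
  proof
    assume "1 \<in> L"
    then obtain r where r: "r * (1 - f) = 1" unfolding L_def by auto
    have "f = r * (1 - f) * f" by (simp add: r)
    also have "\<dots> = 0" using idem by (simp add: mult.assoc algebra_simps)
    finally show False using \<open>f \<noteq> 0\<close> by simp
  qed
  then obtain M where M: "maximal_left_ideal M" "L \<subseteq> M"
    using exists_maximal_left_ideal_superset left_ideal_range_mult_right unfolding L_def by blast
  then have "left_ideal M" unfolding maximal_left_ideal_def by blast
  moreover have "f \<in> M" using \<open>f \<in> jacobson\<close> M(1) unfolding jacobson_def by blast
  moreover have "1 - f \<in> M" using M(2) unfolding L_def by (auto intro: range_eqI[of _ _ 1])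
  ultimately have "f + (1 - f) \<in> M" unfolding left_ideal_def by blast
  then show False using M(1) left_ideal_eq_UNIV_iff unfolding maximal_left_ideal_def by auto
qed

lemma von_neumann_regular_jacobson_eq_0:
  fixes u :: "'a::ring_1"
  assumes "von_neumann_regular TYPE('a)" and "u \<in> jacobson"
  shows "u = 0"
proof -
  obtain y where y: "u * y * u = u" using assms(1) unfolding von_neumann_regular_def by blast
  have "(y * u) * (y * u) = y * u" using y by (simp add: mult.assoc)
  moreover have "y * u \<in> jacobson" using assms(2) by (rule jacobson_mult_left)
  ultimately have "y * u = 0" by (rule idempotent_in_jacobson_eq_0)
  have "u = u * (y * u)" using y by (simp add: mult.assoc)
  then show ?thesis using \<open>y * u = 0\<close> by simp
qed

lemma boolean_ring_add_self:
  fixes z :: "'a::ring_1"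
  assumes "boolean_ring TYPE('a)"
  shows "z + z = 0"
proof -
  have sq: "\<And>x::'a. x * x = x" using assms unfolding boolean_ring_def by blast
  have "z + z = (z + z) * (z + z)" by (rule sq[symmetric])
  also have "\<dots> = z * z + z * z + (z * z + z * z)" by (simp add: algebra_simps)
  also have "\<dots> = (z + z) + (z + z)" by (simp only: sq)
  finally have "z + z = (z + z) + (z + z)" .
  then show ?thesis by (metis add_cancel_right_right)
qed

lemma boolean_ring_mult_commute:
  fixes x y :: "'a::ring_1"
  assumes "boolean_ring TYPE('a)"
  shows "x * y = y * x"
proof -
  have sq: "\<And>z::'a. z * z = z" using assms unfolding boolean_ring_def by blast
  have "x + y = (x + y) * (x + y)" by (rule sq[symmetric])
  also have "\<dots> = x * x + x * y + (y * x + y * y)" by (simp add: algebra_simps)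
  also have "\<dots> = x + y + (x * y + y * x)" by (simp only: sq add_ac)
  finally have "x * y + y * x = 0" by (metis add_cancel_right_right)
  moreover have "y * x + y * x = 0" using assms by (rule boolean_ring_add_self)
  ultimately show ?thesis by (metis add_right_imp_eq)
qed

lemma involution_diff:
  assumes "is_involution star"
  shows "star (x - y) = star x - star y"
proof -
  have "star (x - y + y) = star (x - y) + star y"
    using assms unfolding is_involution_def by blast
  then show ?thesis by (simp add: eq_diff_eq)
qed

text \<open>With \<open>s = a\<^sup>*\<close>, normality gives \<open>y\<^sup>* y = 0\<close> for \<open>y = a - a s\<close>, so \<open>a = a s\<close>,
  which is self-adjoint.\<close>

lemma normal_idempotent_is_projection:
  assumes inv: "is_involution star" and proper: "proper_involution star"
    and idem: "a * a = a" and normal: "a * star a = star a * a"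
  shows "is_projection star a"
proof -
  have mult: "\<And>x y. star (x * y) = star y * star x" and invol: "\<And>x. star (star x) = x"
    using inv unfolding is_involution_def by blast+
  define s where "s = star a"
  have sa: "s * a = a * s" using normal unfolding s_def by simp
  have s_idem: "s * s = s" using mult[of a a] idem unfolding s_def by simp
  have star_as: "star (a * s) = a * s" using mult[of a s] invol[of a] unfolding s_def by simp
  define y where "y = a - a * s"
  have "star y * y = (s - a * s) * (a - a * s)"
    unfolding y_def involution_diff[OF inv] star_as s_def[symmetric] ..
  also have "\<dots> = 0"
  proof -
    have "s * (a * s) = a * s" by (metis sa mult.assoc s_idem)
    moreover have "a * (s * a) = a * s" by (metis sa mult.assoc idem)
    moreover have "a * (s * (a * s)) = a * s" using \<open>s * (a * s) = a * s\<close> by (metis mult.assoc idem)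
    ultimately show ?thesis using sa by (simp add: algebra_simps)
  qed
  finally have "y = 0" using proper unfolding proper_involution_def by blast
  then have "a = a * s" unfolding y_def by simp
  then have "star a = a" using star_as unfolding s_def by simp
  then show ?thesis using idem unfolding is_projection_def by simp
qed

theorem corollary2p9:
  fixes star :: "'a::ring_1 \<Rightarrow> 'a"
  assumes "star_regular star"
  shows "strongly_J_star_clean star \<longleftrightarrow> boolean_ring TYPE('a)"
proof
  assume clean: "strongly_J_star_clean star"
  show "boolean_ring TYPE('a)" unfolding boolean_ring_def
  proof
    fix a :: 'a
    obtain e u where "a = e + u" "is_projection star e" "u \<in> jacobson"
      using clean unfolding strongly_J_star_clean_def by blast
    moreover have "u = 0"
      using assms \<open>u \<in> jacobson\<close> von_neumann_regular_jacobson_eq_0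
      unfolding star_regular_def by blast
    ultimately show "a * a = a" unfolding is_projection_def by simp
  qed
next
  assume bool: "boolean_ring TYPE('a)"
  have "is_projection star a" for a :: 'a
    using assms bool normal_idempotent_is_projection boolean_ring_mult_commute
    unfolding star_regular_def boolean_ring_def by metis
  then show "strongly_J_star_clean star"
    unfolding strongly_J_star_clean_def
    by (metis add.right_neutral zero_in_jacobson)
qed

end
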